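(* Let $G$ be an $r$-regular graph on $m$ vertices with $r\ge 1$ (i.e. $G$ has at least one edge). (a) If $n\ge 2$ is even, then $K_n\boxtimes G$ is $\mathbb{Z}_{nm}$-distance antimagic. (b) If $n\ge 3$ and $m$ are both odd, then $K_n\boxtimes G$ is $\mathbb{Z}_{nm}$-distance antimagic.
   Context: $K_n$ is the complete graph on $n$ vertices. The strong product $G_1\boxtimes G_2$ has vertex set $V(G_1)\times V(G_2)$, with distinct $(x_1,x_2),(y_1,y_2)$ adjacent iff for each $i$ either $x_i=y_i$ or $x_iy_i\in E(G_i)$. For a graph $H$ with $N$ vertices, a $\mathbb{Z}_N$-distance antimagic labelling is a bijection $f:V(H)\to\mathbb{Z}_N$ such that the weights $w_f(x)=\sum_{y\in N(x)} f(y)$ (mod $N$, $N(x)$ the open neighbourhood) are pairwise distinct; $H$ is $\mathbb{Z}_N$-distance antimagic if such a labelling exists. *)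

theory Defs
  imports Main
begin

definition simple_graph :: "'a set \<Rightarrow> ('a \<Rightarrow> 'a \<Rightarrow> bool) \<Rightarrow> bool" where
  "simple_graph V E \<longleftrightarrow> finite V \<and>
     (\<forall>x y. E x y \<longrightarrow> x \<in> V \<and> y \<in> V) \<and>
     (\<forall>x y. E x y \<longrightarrow> E y x) \<and> (\<forall>x. \<not> E x x)"

definition nbhd :: "'a set \<Rightarrow> ('a \<Rightarrow> 'a \<Rightarrow> bool) \<Rightarrow> 'a \<Rightarrow> 'a set" where
  "nbhd V E x = {y \<in> V. E x y}"

definition regular :: "'a set \<Rightarrow> ('a \<Rightarrow> 'a \<Rightarrow> bool) \<Rightarrow> nat \<Rightarrow> bool" where
  "regular V E r \<longleftrightarrow> (\<forall>x\<in>V. card (nbhd V E x) = r)"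

definition K_verts :: "nat \<Rightarrow> nat set" where "K_verts n = {0..<n}"
definition K_adj :: "nat \<Rightarrow> nat \<Rightarrow> bool" where "K_adj x y \<longleftrightarrow> x \<noteq> y"

definition strong_verts :: "'a set \<Rightarrow> 'b set \<Rightarrow> ('a \<times> 'b) set" where
  "strong_verts V1 V2 = V1 \<times> V2"
definition strong_adj :: "('a \<Rightarrow> 'a \<Rightarrow> bool) \<Rightarrow> ('b \<Rightarrow> 'b \<Rightarrow> bool) \<Rightarrow> 'a \<times> 'b \<Rightarrow> 'a \<times> 'b \<Rightarrow> bool" where
  "strong_adj E1 E2 x y \<longleftrightarrow> x \<noteq> y \<and>
     (fst x = fst y \<or> E1 (fst x) (fst y)) \<and> (snd x = snd y \<or> E2 (snd x) (snd y))"

(* Z_N-distance antimagic labelling, N = |V|; Z_N represented by {0..<N} with arithmetic mod N *)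
definition ZN_dist_antimagic_labelling :: "'a set \<Rightarrow> ('a \<Rightarrow> 'a \<Rightarrow> bool) \<Rightarrow> ('a \<Rightarrow> nat) \<Rightarrow> bool" where
  "ZN_dist_antimagic_labelling V E f \<longleftrightarrow> bij_betw f V {0..<card V} \<and>
     inj_on (\<lambda>x. (\<Sum>y\<in>nbhd V E x. f y) mod card V) V"

definition ZN_dist_antimagic :: "'a set \<Rightarrow> ('a \<Rightarrow> 'a \<Rightarrow> bool) \<Rightarrow> bool" where
  "ZN_dist_antimagic V E \<longleftrightarrow> (\<exists>f. ZN_dist_antimagic_labelling V E f)"

end

theory Submission imports Defs begin

(* Label vertex (j, v) of K_n \<boxtimes> G by j m + p_j(v), where p_0, ..., p_(n-1) are permutations
   of {0..<m} whose sums p_0(k) + ... + p_(n-1)(k) do not depend on k. The closed neighbourhood of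
   (i, v) is {0..<n} \<times> N[v], so its label sum is the same constant K for every vertex, and the
   weight of x is K - f(x): distinct labels below n m give distinct weights modulo n m. Such
   permutation families exist for even n (identity and reversal alternately) and, when m is odd,
   for odd n. *)

lemma diff_mod_inj:
  fixes K N a b :: nat
  assumes "a < N" "b < N" "a \<le> K" "b \<le> K" "(K - a) mod N = (K - b) mod N"
  shows "a = b"
proof -
  have "(int K - int a) mod int N = (int K - int b) mod int N"
    using assms(3-5) by (simp flip: of_nat_mod of_nat_diff)
  hence "(int K - (int K - int a)) mod int N = (int K - (int K - int b)) mod int N"
    by (rule mod_diff_cong[OF refl])
  thus ?thesis using assms(1,2) by simp
qed

lemma ZN_dist_antimagic_labellingI_closed_sum:
  assumes bij: "bij_betw f V {0..<card V}"
    and closed: "\<And>x. x \<in> V \<Longrightarrow> f x + (\<Sum>y\<in>nbhd V E x. f y) = K"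
  shows "ZN_dist_antimagic_labelling V E f"
  unfolding ZN_dist_antimagic_labelling_def
proof (intro conjI bij inj_onI)
  fix x y assume x: "x \<in> V" and y: "y \<in> V"
    and eq: "(\<Sum>z\<in>nbhd V E x. f z) mod card V = (\<Sum>z\<in>nbhd V E y. f z) mod card V"
  have "f x < card V" "f y < card V" using bij x y by (auto dest: bij_betwE)
  moreover have "f x \<le> K" "f y \<le> K"
    using closed[OF x] closed[OF y] by linarith+
  moreover have "K - f x = (\<Sum>z\<in>nbhd V E x. f z)" "K - f y = (\<Sum>z\<in>nbhd V E y. f z)"
    using closed[OF x] closed[OF y] by linarith+
  ultimately have "f x = f y" using eq by (metis diff_mod_inj)
  thus "x = y" using bij x y by (auto simp: bij_betw_def inj_on_def)
qed

lemma nbhd_strong_complete: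
  assumes "\<And>w. E v w \<Longrightarrow> w \<in> V" and "i < n" "v \<in> V"
  shows "nbhd (strong_verts (K_verts n) V) (strong_adj K_adj E) (i, v)
       = {0..<n} \<times> insert v (nbhd V E v) - {(i, v)}"
  using assms
  by (auto simp: nbhd_def strong_verts_def K_verts_def strong_adj_def K_adj_def)

lemma bij_betw_layered_labelling:
  fixes m n :: nat
  assumes e: "bij_betw e V {0..<m}"
    and \<pi>: "\<And>j. j < n \<Longrightarrow> bij_betw (\<pi> j) {0..<m} {0..<m}"
  shows "bij_betw (\<lambda>(j, v). j * m + \<pi> j (e v)) ({0..<n} \<times> V) {0..<n * m}"
    (is "bij_betw ?f ?A ?B")
proof -
  have below: "\<pi> j (e v) < m" if "j < n" "v \<in> V" for j v
    using that bij_betwE[OF \<pi>] bij_betwE[OF e] by auto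
  have "?f ` ?A \<subseteq> ?B"
  proof clarsimp
    fix j :: nat and v assume "j < n" "v \<in> V"
    hence "j * m + \<pi> j (e v) < (j + 1) * m" using below by simp
    also have "\<dots> \<le> n * m" using \<open>j < n\<close> by (intro mult_le_mono1) simp
    finally show "j * m + \<pi> j (e v) < n * m" .
  qed
  moreover have "inj_on ?f ?A"
  proof (rule inj_onI)
    fix x y assume "x \<in> ?A" "y \<in> ?A" and eq: "?f x = ?f y"
    then obtain j v j' v' where x: "x = (j, v)" "j < n" "v \<in> V"
      and y: "y = (j', v')" "j' < n" "v' \<in> V" by auto
    from eq have "(j * m + \<pi> j (e v)) div m = (j' * m + \<pi> j' (e v')) div m"
      by (simp add: x y)
    hence "j = j'" using below[OF x(2,3)] below[OF y(2,3)] by simp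
    with eq have "\<pi> j (e v) = \<pi> j (e v')" by (simp add: x y)
    hence "e v = e v'"
      using bij_betw_imp_inj_on[OF \<pi>[OF x(2)]] bij_betwE[OF e] x y by (auto simp: inj_on_def)
    hence "v = v'" using bij_betw_imp_inj_on[OF e] x y by (auto simp: inj_on_def)
    thus "x = y" using \<open>j = j'\<close> x y by simp
  qed
  moreover have "card ?A = card ?B"
    using bij_betw_same_card[OF e] by (simp add: card_cartesian_product)
  ultimately show ?thesis
    by (simp add: bij_betw_def card_subset_eq card_image)
qed

definition column_magic :: "nat \<Rightarrow> nat \<Rightarrow> (nat \<Rightarrow> nat \<Rightarrow> nat) \<Rightarrow> bool" where
  "column_magic n m \<pi> \<longleftrightarrow>
     (\<forall>j<n. bij_betw (\<pi> j) {0..<m} {0..<m}) \<and> (\<exists>c. \<forall>k<m. (\<Sum>j<n. \<pi> j k) = c)"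

lemma ZN_dist_antimagic_strong_complete:
  assumes sg: "simple_graph V E" and card: "card V = m" and reg: "regular V E r"
    and magic: "column_magic n m \<pi>"
  shows "ZN_dist_antimagic (strong_verts (K_verts n) V) (strong_adj K_adj E)"
proof -
  obtain c where rows: "\<And>j. j < n \<Longrightarrow> bij_betw (\<pi> j) {0..<m} {0..<m}"
    and cols: "\<And>k. k < m \<Longrightarrow> (\<Sum>j<n. \<pi> j k) = c"
    using magic by (auto simp: column_magic_def)
  have finV: "finite V" using sg by (simp add: simple_graph_def)
  obtain e where e: "bij_betw e V {0..<m}"
    using finV card ex_bij_betw_finite_nat by blast
  define W where "W = strong_verts (K_verts n) V"
  have W: "W = {0..<n} \<times> V" by (simp add: W_def strong_verts_def K_verts_def)
  define f where "f = (\<lambda>(j, v). j * m + \<pi> j (e v))"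
  have bij: "bij_betw f W {0..<card W}"
    using bij_betw_layered_labelling[OF e rows] card
    by (simp add: W f_def card_cartesian_product)
  define K where "K = (r + 1) * ((\<Sum>j<n. j * m) + c)"
  have closed: "f x + (\<Sum>y\<in>nbhd W (strong_adj K_adj E) x. f y) = K" if "x \<in> W" for x
  proof -
    obtain i v where x: "x = (i, v)" "i < n" "v \<in> V" using \<open>x \<in> W\<close> W by auto
    define N where "N = insert v (nbhd V E v)"
    have NV: "N \<subseteq> V" using x by (auto simp: N_def nbhd_def)
    have "card N = r + 1"
      using reg sg x finV by (simp add: N_def regular_def nbhd_def simple_graph_def)
    have "f x + (\<Sum>y\<in>nbhd W (strong_adj K_adj E) x. f y) = (\<Sum>y\<in>{0..<n} \<times> N. f y)"
      using nbhd_strong_complete[of E v V i n] sg x finV NV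
      by (simp add: W_def N_def simple_graph_def sum.remove[symmetric] finite_subset)
    also have "\<dots> = (\<Sum>j<n. \<Sum>w\<in>N. f (j, w))"
      using sum.cartesian_product[of "\<lambda>j w. f (j, w)" N "{0..<n}"]
      by (simp add: atLeast0LessThan)
    also have "\<dots> = (\<Sum>w\<in>N. \<Sum>j<n. f (j, w))"
      by (rule sum.swap)
    also have "\<dots> = (\<Sum>w\<in>N. (\<Sum>j<n. j * m) + c)"
      using NV bij_betwE[OF e] cols by (intro sum.cong) (auto simp: f_def sum.distrib)
    also have "\<dots> = K" using \<open>card N = r + 1\<close> by (simp add: K_def)
    finally show ?thesis .
  qed
  show ?thesis
    unfolding ZN_dist_antimagic_def W_def[symmetric]
    using ZN_dist_antimagic_labellingI_closed_sum[OF bij closed] by blast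
qed

lemma bij_betw_atLeast0LessThan_selfI:
  fixes g :: "nat \<Rightarrow> nat"
  assumes "inj_on g {0..<m}" and "\<And>k. k < m \<Longrightarrow> g k < m"
  shows "bij_betw g {0..<m} {0..<m}"
proof -
  have "g ` {0..<m} \<subseteq> {0..<m}" using assms(2) by auto
  thus ?thesis by (simp add: bij_betw_def assms(1) endo_inj_surj)
qed

definition alternating_rows :: "nat \<Rightarrow> nat \<Rightarrow> nat \<Rightarrow> nat" where
  "alternating_rows m j k = (if even j then k else m - 1 - k)"

lemma column_magic_alternating_rows: "column_magic (2 * t) m (alternating_rows m)"
proof -
  have "(\<Sum>j<2 * t. alternating_rows m j k) = t * (m - 1)" if "k < m" for k
    using that by (induction t) (auto simp: alternating_rows_def)
  moreover have "bij_betw (alternating_rows m j) {0..<m} {0..<m}" for j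
    by (rule bij_betw_atLeast0LessThan_selfI) (auto simp: alternating_rows_def inj_on_def)
  ultimately show ?thesis unfolding column_magic_def by blast
qed

(* Rows 0, 1, 2 form a 3 \<times> (2h+1) array whose rows are permutations of {0..2h} and whose
   columns all sum to 3h; the remaining rows come in pairs k, 2h - k. *)
definition odd_rows :: "nat \<Rightarrow> nat \<Rightarrow> nat \<Rightarrow> nat" where
  "odd_rows h j k =
     (if j = 0 then k
      else if j = 1 then (if k \<le> h then k + h else k - h - 1)
      else if j = 2 then (if k \<le> h then 2 * (h - k) else 4 * h + 1 - 2 * k)
      else if odd j then k else 2 * h - k)"

lemma sum_odd_rows:
  assumes "k < 2 * h + 1"
  shows "(\<Sum>j<2 * t + 3. odd_rows h j k) = 3 * h + t * (2 * h)"
proof (induction t)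
  case 0
  have "(\<Sum>j<3. odd_rows h j k) = odd_rows h 0 k + odd_rows h 1 k + odd_rows h 2 k"
    by (simp add: numeral_3_eq_3 numeral_2_eq_2)
  also have "\<dots> = 3 * h" using assms unfolding odd_rows_def by simp arith
  finally show ?case by simp
next
  case (Suc t)
  have "(\<Sum>j<2 * Suc t + 3. odd_rows h j k)
      = (\<Sum>j<2 * t + 3. odd_rows h j k) + odd_rows h (2 * t + 3) k + odd_rows h (2 * t + 4) k"
    by (simp add: eval_nat_numeral)
  also have "\<dots> = 3 * h + Suc t * (2 * h)"
    using Suc.IH assms by (simp add: odd_rows_def)
  finally show ?case .
qed

lemma column_magic_odd_rows: "column_magic (2 * t + 3) (2 * h + 1) (odd_rows h)"
proof -
  have "bij_betw (odd_rows h j) {0..<2 * h + 1} {0..<2 * h + 1}" for j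
  proof (rule bij_betw_atLeast0LessThan_selfI)
    show "inj_on (odd_rows h j) {0..<2 * h + 1}"
      unfolding inj_on_def odd_rows_def by auto presburger+
  qed (auto simp: odd_rows_def)
  thus ?thesis using sum_odd_rows unfolding column_magic_def by blast
qed

theorem mainTheorem18:
  fixes V :: "'a set" and E :: "'a \<Rightarrow> 'a \<Rightarrow> bool" and r m n :: nat
  assumes "simple_graph V E" and "card V = m" and "regular V E r" and "r \<ge> 1"
  shows "(even n \<and> n \<ge> 2 \<longrightarrow>
            ZN_dist_antimagic (strong_verts (K_verts n) V) (strong_adj K_adj E))
       \<and> (odd n \<and> n \<ge> 3 \<and> odd m \<longrightarrow>
            ZN_dist_antimagic (strong_verts (K_verts n) V) (strong_adj K_adj E))"
proof (intro conjI impI)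
  assume "even n \<and> n \<ge> 2"
  then obtain t where "n = 2 * t" by blast
  hence "column_magic n m (alternating_rows m)" by (simp add: column_magic_alternating_rows)
  thus "ZN_dist_antimagic (strong_verts (K_verts n) V) (strong_adj K_adj E)"
    by (rule ZN_dist_antimagic_strong_complete[OF assms(1-3)])
next
  assume odd: "odd n \<and> n \<ge> 3 \<and> odd m"
  then obtain h where m: "m = 2 * h + 1" using oddE by blast
  have n: "n = 2 * ((n - 3) div 2) + 3" using odd by presburger
  have "column_magic n m (odd_rows h)" unfolding m by (subst n) (rule column_magic_odd_rows)
  thus "ZN_dist_antimagic (strong_verts (K_verts n) V) (strong_adj K_adj E)"
    by (rule ZN_dist_antimagic_strong_complete[OF assms(1-3)])
qed

end
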